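(* Let $X$ be a real Hilbert space, $I=\{1,\dots,m\}$, and $(U_i)_{i\in I}$ closed linear subspaces of $X$. Set $U_{m+1}=U_1$, and suppose $U_i+U_{i+1}$ is closed for every $i\in I$. Set $T_i=P_{U_{i+1}}R_{U_i}+\mathrm{Id}-P_{U_i}$, $Z_i=\operatorname{Fix}T_i$, $Z=\bigcap_{i\in I}Z_i$, and $T=T_m\cdots T_1$. Suppose the family $(Z_i)_{i\in I}$ is boundedly linearly regular. Then for every $x_0\in X$, the sequence $(T^nx_0)_{n\in\mathbb N}$ converges linearly to a point of $Z$.
   Context: $P_S$ is the orthogonal projection onto $S$, $R_S=2P_S-\mathrm{Id}$. A finite family $(C_i)_{i\in I}$ of closed convex sets with $C=\bigcap_iC_i\ne\varnothing$ is boundedly linearly regular if for every $\rho>0$ there is $\mu>0$ with $d_C(x)\le\mu\max_{i}d_{C_i}(x)$ for all $\|x\|\le\rho$. Linear convergence to $\bar x$ means $\|x_n-\bar x\|\le cq^n$ for some $c\ge0$, $q\in[0,1[$. *)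

theory Defs
  imports "HOL-Analysis.Analysis"
begin

text \<open>Orthogonal (metric) projection onto a set S: the unique nearest point.
  Well defined for nonempty closed convex sets of a real Hilbert space.\<close>
definition proj :: "'a::real_inner set \<Rightarrow> 'a \<Rightarrow> 'a" where
  "proj S x = (THE p. p \<in> S \<and> (\<forall>y\<in>S. dist x p \<le> dist x y))"

definition reflector :: "'a::real_inner set \<Rightarrow> 'a \<Rightarrow> 'a" where
  "reflector S x = 2 *\<^sub>R proj S x - x"

definition Fix :: "('a \<Rightarrow> 'a) \<Rightarrow> 'a set" where
  "Fix f = {x. f x = x}"

fun comp_upto :: "(nat \<Rightarrow> 'a \<Rightarrow> 'a) \<Rightarrow> nat \<Rightarrow> 'a \<Rightarrow> 'a" where
  "comp_upto T 0 = id"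
| "comp_upto T (Suc k) = T (Suc k) \<circ> comp_upto T k"

definition boundedly_linearly_regular :: "'i set \<Rightarrow> ('i \<Rightarrow> 'a::real_normed_vector set) \<Rightarrow> bool" where
  "boundedly_linearly_regular I C \<longleftrightarrow>
     finite I \<and> I \<noteq> {} \<and> (\<forall>i\<in>I. closed (C i) \<and> convex (C i)) \<and> (\<Inter>i\<in>I. C i) \<noteq> {} \<and>
     (\<forall>\<rho>>0. \<exists>\<mu>>0. \<forall>x. norm x \<le> \<rho> \<longrightarrow>
        infdist x (\<Inter>i\<in>I. C i) \<le> \<mu> * Max ((\<lambda>i. infdist x (C i)) ` I))"

definition converges_linearly :: "(nat \<Rightarrow> 'a::real_normed_vector) \<Rightarrow> 'a \<Rightarrow> bool" where
  "converges_linearly x xb \<longleftrightarrow>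
     (\<exists>c q. c \<ge> 0 \<and> 0 \<le> q \<and> q < 1 \<and> (\<forall>n. norm (x n - xb) \<le> c * q ^ n))"

end

theory Submission
  imports Defs
begin

(* Each T_i = P_{U(i+1)} R_{U_i} + Id - P_{U_i} is a linear, firmly nonexpansive
   operator (the Douglas-Rachford operator of the pair U_i, U(i+1)).  The proof has
   four layers, developed in this order:
   (1) the Hilbert projection onto a nonempty closed convex set exists (minimizing
       sequences are Cauchy by the parallelogram law); onto a closed subspace it is
       the linear map characterised by orthogonality of the residual;
   (2) if A + B is closed, Baire's theorem gives a bounded decomposition of A + B;
       this yields linear regularity of both pairs {A, B} and {A-perp, B-perp};
   (3) consequently the distance to Fix T_i is bounded by a multiple of |x - T_i x|
       ("T_i is linearly regular"), and T_i is strongly quasi-nonexpansive;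
   (4) a composition of such operators whose fixed point sets form a boundedly
       linearly regular family shrinks the distance to the common fixed point set
       by a factor q < 1 on bounded sets; together with Fejer monotonicity of the
       orbit this gives linear convergence to a common fixed point. *)

section \<open>Projections onto closed convex sets\<close>

lemma parallelogram_midpoint:
  fixes x p q :: "'a::real_inner"
  shows "norm (x - (1/2) *\<^sub>R (p + q))^2 = (norm (x-p)^2 + norm (x-q)^2)/2 - norm (p - q)^2/4"
  by (simp add: power2_norm_eq_inner inner_diff_left inner_diff_right inner_add_left inner_add_right
       inner_commute algebra_simps) (simp add: field_simps)

lemma convex_midpoint:
  assumes "convex S" "p \<in> S" "q \<in> S"
  shows "(1/2) *\<^sub>R (p + q) \<in> S"
proof -
  have "(1/2) *\<^sub>R p + (1/2) *\<^sub>R q \<in> S" using assms by (intro convexD) auto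
  thus ?thesis by (simp add: scaleR_right_distrib)
qed

text \<open>A minimizing sequence for the distance from a point to a convex set is Cauchy:
  by the parallelogram law, two nearly-minimizing points are close to each other.\<close>
lemma minimizing_sequence_Cauchy:
  fixes S :: "'a::real_inner set"
  assumes cv: "convex S" and yS: "\<And>n. y n \<in> S"
    and yd: "\<And>n. dist x (y n) < infdist x S + 1/(Suc n)"
  shows "Cauchy y"
proof -
  define d where "d = infdist x S"
  have d0: "d \<ge> 0" by (simp add: d_def infdist_nonneg)
  have sq: "norm (x - y n)^2 \<le> d^2 + (2*d+1)/(Suc n)" for n
  proof -
    have "norm (x - y n)^2 \<le> (d + 1/(Suc n))^2"
      using yd[of n] by (intro power_mono) (auto simp: d_def dist_norm)
    also have "\<dots> = d^2 + (2*d + 1/Suc n)/(Suc n)"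
    proof -
      have "\<And>t::real. t > 0 \<Longrightarrow> (d + 1/t)^2 = d^2 + (2*d + 1/t)/t"
        by (simp add: power2_eq_square field_simps)
      thus ?thesis by simp
    qed
    also have "\<dots> \<le> d^2 + (2*d+1)/(Suc n)"
      by (intro add_left_mono divide_right_mono) auto
    finally show ?thesis .
  qed
  have bound: "norm (y n - y k)^2 \<le> 2*((2*d+1)/(Suc n)) + 2*((2*d+1)/(Suc k))" for n k
  proof -
    have "d \<le> dist x ((1/2) *\<^sub>R (y n + y k))"
      unfolding d_def by (rule infdist_le) (rule convex_midpoint[OF cv yS yS])
    hence "d^2 \<le> norm (x - (1/2) *\<^sub>R (y n + y k))^2"
      using d0 by (simp add: dist_norm power_mono)
    also have "\<dots> = (norm (x - y n)^2 + norm (x - y k)^2)/2 - norm (y n - y k)^2/4"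
      by (rule parallelogram_midpoint)
    finally show ?thesis using sq[of n] sq[of k] by argo
  qed
  show "Cauchy y"
  proof (rule metric_CauchyI)
    fix e :: real assume e: "e > 0"
    obtain N where N: "4*(2*d+1) / e^2 < real N" using reals_Archimedean2 by blast
    show "\<exists>M. \<forall>m\<ge>M. \<forall>n\<ge>M. dist (y m) (y n) < e"
    proof (intro exI allI impI)
      fix m n assume mn: "N \<le> m" "N \<le> n"
      have h: "(2*d+1)/(Suc k) \<le> (2*d+1)/(Suc N)" if "N \<le> k" for k
        using that d0 by (intro divide_left_mono) auto
      have "norm (y m - y n)^2 \<le> 4*((2*d+1)/(Suc N))"
        using bound[of m n] h[OF mn(1)] h[OF mn(2)] by argo
      also have "\<dots> < e^2"
        using N e d0 by (simp add: field_simps) (smt (verit) zero_less_power)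
      finally show "dist (y m) (y n) < e"
        using e by (simp add: dist_norm power_less_imp_less_base)
    qed
  qed
qed

lemma nearest_point_exists:
  fixes S :: "'a::{real_inner,complete_space} set"
  assumes cl: "closed S" and cv: "convex S" and ne: "S \<noteq> {}"
  shows "\<exists>p\<in>S. \<forall>y\<in>S. dist x p \<le> dist x y"
proof -
  have "\<exists>y\<in>S. dist x y < infdist x S + 1/(Suc n)" for n
  proof -
    have "(INF a\<in>S. dist x a) < infdist x S + 1/(Suc n)"
      using ne by (simp add: infdist_notempty)
    then show ?thesis by (subst (asm) cINF_less_iff) (use ne in \<open>auto intro: bdd_belowI2[where m=0]\<close>)
  qed
  then obtain y where yS: "\<And>n. y n \<in> S" and yd: "\<And>n. dist x (y n) < infdist x S + 1/(Suc n)"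
    by metis
  obtain p where yp: "y \<longlonglongrightarrow> p"
    using minimizing_sequence_Cauchy[OF cv yS yd] Cauchy_convergent_iff convergent_def by blast
  have pS: "p \<in> S" using cl yS yp closed_sequentially by blast
  have "(\<lambda>n. dist x (y n)) \<longlonglongrightarrow> dist x p" by (intro tendsto_intros yp)
  moreover have "(\<lambda>n. infdist x S + 1/(Suc n)) \<longlonglongrightarrow> infdist x S"
    using tendsto_add[OF tendsto_const LIMSEQ_Suc[OF lim_inverse_n']] by (simp add: divide_inverse)
  ultimately have "dist x p \<le> infdist x S"
    by (rule LIMSEQ_le) (use yd less_imp_le in auto)
  thus ?thesis using pS infdist_le[of _ S x] by force
qed

text \<open>Uniqueness of the nearest point, again by the parallelogram law.\<close>
lemma nearest_point_unique:
  fixes S :: "'a::real_inner set"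
  assumes cv: "convex S" and p: "p \<in> S" "\<forall>y\<in>S. dist x p \<le> dist x y"
    and q: "q \<in> S" "\<forall>y\<in>S. dist x q \<le> dist x y"
  shows "p = q"
proof -
  have e: "dist x p = dist x q" using p q by (meson order_antisym)
  have "dist x p \<le> norm (x - (1/2) *\<^sub>R (p + q))"
    using p(2) convex_midpoint[OF cv p(1) q(1)] by (simp add: dist_norm)
  hence "(dist x p)^2 \<le> (norm (x - (1/2) *\<^sub>R (p + q)))^2" by (simp add: power_mono)
  also have "\<dots> = (norm (x-p)^2 + norm (x-q)^2)/2 - norm (p - q)^2/4" by (rule parallelogram_midpoint)
  finally have "norm (p - q)^2 \<le> 0" using e by (simp add: dist_norm)
  thus ?thesis by simp
qed

lemma proj_unique:
  fixes S :: "'a::real_inner set"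
  assumes "convex S" "p \<in> S" "\<forall>y\<in>S. dist x p \<le> dist x y"
  shows "proj S x = p"
  unfolding proj_def
  by (rule the_equality) (use assms nearest_point_unique in blast)+

lemma proj_nearest:
  fixes S :: "'a::{real_inner,complete_space} set"
  assumes "closed S" "convex S" "S \<noteq> {}"
  shows "proj S x \<in> S" "\<And>y. y \<in> S \<Longrightarrow> dist x (proj S x) \<le> dist x y"
proof -
  obtain p where "p \<in> S" "\<forall>y\<in>S. dist x p \<le> dist x y" using nearest_point_exists[OF assms] by blast
  moreover have "proj S x = p" using proj_unique assms calculation by blast
  ultimately show "proj S x \<in> S" "\<And>y. y \<in> S \<Longrightarrow> dist x (proj S x) \<le> dist x y" by auto
qed

lemma infdist_proj:
  fixes S :: "'a::{real_inner,complete_space} set"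
  assumes "closed S" "convex S" "S \<noteq> {}"
  shows "infdist x S = dist x (proj S x)"
proof (rule antisym)
  show "infdist x S \<le> dist x (proj S x)" using proj_nearest[OF assms] by (simp add: infdist_le)
  show "dist x (proj S x) \<le> infdist x S"
    using assms proj_nearest[OF assms] by (simp add: infdist_notempty cINF_greatest)
qed

section \<open>Projections onto closed linear subspaces\<close>

definition clsubspace :: "'a::real_inner set \<Rightarrow> bool" where
  "clsubspace U \<longleftrightarrow> subspace U \<and> closed U"

definition orthcompl :: "'a::real_inner set \<Rightarrow> 'a set" where
  "orthcompl U = {x. \<forall>u\<in>U. inner x u = 0}"

lemma clsubspace_basic: "clsubspace U \<Longrightarrow> closed U \<and> convex U \<and> U \<noteq> {} \<and> 0 \<in> U"
  using subspace_imp_convex subspace_0 by (auto simp: clsubspace_def)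

lemma clsubspace_Int: "clsubspace A \<Longrightarrow> clsubspace B \<Longrightarrow> clsubspace (A \<inter> B)"
  unfolding clsubspace_def using subspace_inter closed_Int by blast

lemma clsubspace_orthcompl: "clsubspace (orthcompl U)"
proof -
  have "orthcompl U = (\<Inter>u\<in>U. {x. inner x u = 0})" by (auto simp: orthcompl_def)
  moreover have "closed {x. inner x u = 0}" for u :: 'a
    by (intro closed_Collect_eq continuous_intros)
  ultimately have "closed (orthcompl U)" by auto
  moreover have "subspace (orthcompl U)"
    unfolding subspace_def orthcompl_def by (auto simp: inner_add_left)
  ultimately show ?thesis by (simp add: clsubspace_def)
qed

lemma subspace_closure:
  fixes S :: "'a::real_normed_vector set"
  assumes S: "subspace S"
  shows "subspace (closure S)"
  unfolding subspace_def
proof (intro conjI ballI allI)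
  show "0 \<in> closure S" using S closure_subset subspace_0 by blast
  fix x y assume x: "x \<in> closure S" and y: "y \<in> closure S"
  obtain f where f: "\<And>n. f n \<in> S" "f \<longlonglongrightarrow> x" using x closure_sequential by blast
  obtain g where g: "\<And>n. g n \<in> S" "g \<longlonglongrightarrow> y" using y closure_sequential by blast
  have "(\<lambda>n. f n + g n) \<longlonglongrightarrow> x + y" by (intro tendsto_intros f g)
  moreover have "\<And>n. f n + g n \<in> S" using S f g by (simp add: subspace_add)
  ultimately show "x + y \<in> closure S" unfolding closure_sequential
    by (intro exI[of _ "\<lambda>n. f n + g n"]) auto
next
  fix c :: real and x assume x: "x \<in> closure S"
  obtain f where f: "\<And>n. f n \<in> S" "f \<longlonglongrightarrow> x" using x closure_sequential by blast
  have "(\<lambda>n. c *\<^sub>R f n) \<longlonglongrightarrow> c *\<^sub>R x" by (intro tendsto_intros f)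
  moreover have "\<And>n. c *\<^sub>R f n \<in> S" using S f by (simp add: subspace_scale)
  ultimately show "c *\<^sub>R x \<in> closure S" unfolding closure_sequential
    by (intro exI[of _ "\<lambda>n. c *\<^sub>R f n"]) auto
qed

lemma proj_eqI:
  fixes U :: "'a::real_inner set"
  assumes U: "clsubspace U" and p: "p \<in> U" and o: "\<And>u. u \<in> U \<Longrightarrow> inner (x - p) u = 0"
  shows "proj U x = p"
proof (rule proj_unique)
  show "convex U" using clsubspace_basic[OF U] by blast
  show "p \<in> U" by fact
  show "\<forall>y\<in>U. dist x p \<le> dist x y"
  proof
    fix y assume y: "y \<in> U"
    have "p - y \<in> U" using U p y by (simp add: clsubspace_def subspace_diff)
    hence "orthogonal (x - p) (p - y)" using o by (simp add: orthogonal_def)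
    hence "norm ((x - p) + (p - y))^2 = norm (x - p)^2 + norm (p - y)^2"
      by (rule norm_add_Pythagorean)
    hence "norm (x - p)^2 \<le> norm (x - y)^2" by simp
    hence "norm (x - p) \<le> norm (x - y)" by (rule power2_le_imp_le) simp
    thus "dist x p \<le> dist x y" by (simp add: dist_norm)
  qed
qed

lemma proj_in:
  fixes U :: "'a::{real_inner,complete_space} set"
  shows "clsubspace U \<Longrightarrow> proj U x \<in> U"
  using proj_nearest clsubspace_basic by blast

text \<open>Conversely, the residual of the projection is orthogonal to the subspace: otherwise
  moving from the projection along a suitable direction of the subspace gets closer.\<close>
lemma proj_orth:
  fixes U :: "'a::{real_inner,complete_space} set"
  assumes U: "clsubspace U" and u: "u \<in> U"
  shows "inner (x - proj U x) u = 0"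
proof -
  define p where "p = proj U x"
  define c where "c = inner (x - p) u"
  define n where "n = norm u ^ 2"
  define t where "t = c / (n + 1)"
  have n0: "n \<ge> 0" by (simp add: n_def)
  have "p + t *\<^sub>R u \<in> U"
    using U proj_in[OF U] u by (simp add: p_def clsubspace_def subspace_add subspace_scale)
  hence "dist x p \<le> dist x (p + t *\<^sub>R u)"
    using proj_nearest(2) clsubspace_basic[OF U] by (auto simp: p_def)
  hence "norm (x - p)^2 \<le> norm ((x - p) - t *\<^sub>R u)^2"
    by (simp add: dist_norm power_mono algebra_simps)
  also have "\<dots> = norm (x-p)^2 - 2*t*c + t^2 * n"
    unfolding c_def n_def power2_norm_eq_inner
    by (simp add: inner_diff_left inner_diff_right inner_commute power2_eq_square algebra_simps)
  finally have h: "2*t*c \<le> t^2 * n" by simp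
  have "2*t*c = 2*c^2/(n+1)" using n0 by (simp add: t_def power2_eq_square)
  moreover have "t^2 * n = c^2 * n / (n+1)^2" by (simp add: t_def power_divide)
  ultimately have "2*c^2/(n+1) \<le> c^2 * n / (n+1)^2" using h by simp
  hence "(n+1)^2 * (2*c^2/(n+1)) \<le> (n+1)^2 * (c^2 * n / (n+1)^2)"
    by (rule mult_left_mono) simp
  moreover have "(n+1)^2 * (2*c^2/(n+1)) = 2*c^2*(n+1)" using n0
    by (simp add: power2_eq_square field_simps)
  moreover have "(n+1)^2 * (c^2 * n / (n+1)^2) = c^2 * n" using n0
    by (simp add: field_simps)
  ultimately have "2*c^2*(n+1) \<le> c^2 * n" by simp
  hence "c^2 * (n + 2) \<le> 0" by (simp add: algebra_simps)
  hence "c^2 \<le> 0" using n0 by (smt (verit) mult_nonneg_nonneg zero_le_power2 mult_pos_pos zero_less_power2)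
  thus ?thesis by (simp add: c_def p_def)
qed

lemma proj_residual_orthcompl:
  fixes U :: "'a::{real_inner,complete_space} set"
  shows "clsubspace U \<Longrightarrow> x - proj U x \<in> orthcompl U"
  using proj_orth by (auto simp: orthcompl_def)

lemma proj_self: "clsubspace U \<Longrightarrow> u \<in> U \<Longrightarrow> proj U u = u"
  by (rule proj_eqI) auto

lemma proj_add:
  fixes U :: "'a::{real_inner,complete_space} set"
  assumes U: "clsubspace U"
  shows "proj U (x + y) = proj U x + proj U y"
proof (rule proj_eqI[OF U])
  show "proj U x + proj U y \<in> U"
    using proj_in[OF U] U unfolding clsubspace_def by (simp add: subspace_add)
  fix u assume u: "u \<in> U"
  have "inner (x - proj U x) u = 0" "inner (y - proj U y) u = 0" using proj_orth U u by blast+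
  moreover have "x + y - (proj U x + proj U y) = (x - proj U x) + (y - proj U y)" by simp
  ultimately show "inner (x + y - (proj U x + proj U y)) u = 0"
    by (simp only: inner_add_left)
qed

lemma proj_scale:
  fixes U :: "'a::{real_inner,complete_space} set"
  assumes U: "clsubspace U"
  shows "proj U (c *\<^sub>R x) = c *\<^sub>R proj U x"
proof (rule proj_eqI[OF U])
  show "c *\<^sub>R proj U x \<in> U"
    using proj_in[OF U] U unfolding clsubspace_def by (simp add: subspace_scale)
  fix u assume "u \<in> U"
  hence "inner (x - proj U x) u = 0" using proj_orth U by blast
  thus "inner (c *\<^sub>R x - c *\<^sub>R proj U x) u = 0"
    by (simp add: scaleR_diff_right[symmetric])
qed

lemma proj_diff:
  fixes U :: "'a::{real_inner,complete_space} set"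
  assumes U: "clsubspace U"
  shows "proj U (x - y) = proj U x - proj U y"
  using proj_add[OF U, of x "-y"] proj_scale[OF U, of "-1" y] by simp

lemma proj_orthcompl:
  fixes U :: "'a::{real_inner,complete_space} set"
  assumes U: "clsubspace U"
  shows "proj (orthcompl U) x = x - proj U x"
proof (rule proj_eqI[OF clsubspace_orthcompl])
  show "x - proj U x \<in> orthcompl U" by (rule proj_residual_orthcompl[OF U])
  fix v assume "v \<in> orthcompl U"
  hence "inner v (proj U x) = 0" using proj_in[OF U] unfolding orthcompl_def by blast
  thus "inner (x - (x - proj U x)) v = 0" by (simp add: inner_commute)
qed

lemma orthcompl_orthcompl:
  fixes U :: "'a::{real_inner,complete_space} set"
  assumes U: "clsubspace U"
  shows "orthcompl (orthcompl U) = U"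
proof
  show "U \<subseteq> orthcompl (orthcompl U)" by (auto simp: orthcompl_def inner_commute)
  show "orthcompl (orthcompl U) \<subseteq> U"
  proof
    fix x assume x: "x \<in> orthcompl (orthcompl U)"
    have "proj U x \<in> orthcompl (orthcompl U)"
      using proj_in[OF U] by (auto simp: orthcompl_def inner_commute)
    hence "x - proj U x \<in> orthcompl (orthcompl U)" using x clsubspace_orthcompl[of "orthcompl U"]
      by (simp add: clsubspace_def subspace_diff)
    hence "inner (x - proj U x) (x - proj U x) = 0"
      using proj_residual_orthcompl[OF U] by (auto simp: orthcompl_def)
    thus "x \<in> U" using proj_in[OF U] by (metis eq_iff_diff_eq_0 inner_eq_zero_iff)
  qed
qed

lemma infdist_clsubspace:
  fixes U :: "'a::{real_inner,complete_space} set"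
  assumes "clsubspace U"
  shows "infdist x U = norm (x - proj U x)"
  using infdist_proj[of U x] clsubspace_basic[OF assms] by (simp add: dist_norm)

lemma infdist_orthcompl:
  fixes U :: "'a::{real_inner,complete_space} set"
  assumes "clsubspace U"
  shows "infdist x (orthcompl U) = norm (proj U x)"
  using infdist_clsubspace[OF clsubspace_orthcompl, of x U] proj_orthcompl[OF assms] by simp

section \<open>Closed sums of subspaces and linear regularity\<close>

text \<open>Every element s of C + D can be approximated by c + d with c in C, d in D
  and |d| \<le> M |s|.  For closed C + D this is an open-mapping type property.\<close>
definition bounded_decomposition :: "'a::real_inner set \<Rightarrow> 'a set \<Rightarrow> real \<Rightarrow> bool" where
  "bounded_decomposition C D M \<longleftrightarrow> (\<forall>s \<in> {c + d | c d. c \<in> C \<and> d \<in> D}. \<forall>e>0. \<exists>c\<in>C. \<exists>d\<in>D.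
      norm d \<le> M * norm s \<and> norm (s - c - d) \<le> e)"

text \<open>Under a bounded decomposition, a vector orthogonal to C has a small component in
  the closure of C + D: only its D-part is seen by elements of C + D.\<close>
lemma proj_closure_sum_bound:
  fixes C D :: "'a::{real_inner,complete_space} set"
  assumes C: "clsubspace C" and D: "clsubspace D" and M: "M \<ge> 0"
    and dec: "bounded_decomposition C D M" and y: "y \<in> orthcompl C"
    and S: "S = closure {c + d | c d. c \<in> C \<and> d \<in> D}"
  shows "norm (proj S y) \<le> M * norm (proj D y)"
proof -
  have cS: "clsubspace S"
    unfolding S clsubspace_def using subspace_closure[OF subspace_sums] C D
    by (auto simp: clsubspace_def)
  define w where "w = proj S y"
  have wS: "w \<in> closure {c + d | c d. c \<in> C \<and> d \<in> D}"
    using proj_in[OF cS] S by (simp add: w_def)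
  define pd where "pd = norm (proj D y)"
  have pd0: "pd \<ge> 0" by (simp add: pd_def)
  have ww: "inner y w = norm w ^ 2"
  proof -
    have "inner (y - w) w = 0" using proj_orth[OF cS proj_in[OF cS]] by (simp add: w_def)
    thus ?thesis by (simp add: inner_diff_left power2_norm_eq_inner)
  qed
  have approx: "norm w ^ 2 \<le> M * pd * norm w + (2 * norm y + M * pd) * \<delta>" if dl: "\<delta> > 0" for \<delta>
  proof -
    obtain t where t: "t \<in> {c + d | c d. c \<in> C \<and> d \<in> D}" "dist t w < \<delta>"
      using wS dl unfolding closure_approachable by blast
    obtain c d where cd: "c \<in> C" "d \<in> D" "norm d \<le> M * norm t" "norm (t - c - d) \<le> \<delta>"
      using dec t(1) dl unfolding bounded_decomposition_def by blast
    have split: "inner y w = inner y (w - t) + inner y (t - c - d) + inner y c + inner y d"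
      by (simp add: inner_diff_right)
    have yc: "inner y c = 0" using y cd(1) by (simp add: orthcompl_def)
    have yd: "inner y d = inner (proj D y) d"
      using proj_orth[OF D cd(2), of y] by (simp add: inner_diff_left)
    have b1: "inner y (w - t) \<le> norm y * \<delta>"
    proof -
      have "inner y (w - t) \<le> norm y * norm (w - t)" by (rule norm_cauchy_schwarz)
      also have "\<dots> \<le> norm y * \<delta>"
        using t(2) by (intro mult_left_mono) (auto simp: dist_norm norm_minus_commute)
      finally show ?thesis .
    qed
    have b2: "inner y (t - c - d) \<le> norm y * \<delta>"
    proof -
      have "inner y (t - c - d) \<le> norm y * norm (t - c - d)" by (rule norm_cauchy_schwarz)
      also have "\<dots> \<le> norm y * \<delta>" using cd(4) by (intro mult_left_mono) auto
      finally show ?thesis .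
    qed
    have b3: "inner (proj D y) d \<le> M * pd * norm w + M * pd * \<delta>"
    proof -
      have nt: "norm t \<le> norm w + \<delta>"
        using t(2) norm_triangle_ineq2[of t w] by (simp add: dist_norm)
      have "inner (proj D y) d \<le> pd * norm d" unfolding pd_def by (rule norm_cauchy_schwarz)
      also have "\<dots> \<le> pd * (M * norm t)" using cd(3) pd0 by (intro mult_left_mono)
      also have "\<dots> \<le> pd * (M * (norm w + \<delta>))" using nt M pd0 by (intro mult_left_mono) auto
      finally show ?thesis by (simp add: algebra_simps)
    qed
    have "(2 * norm y + M * pd) * \<delta> = 2 * (norm y * \<delta>) + M * pd * \<delta>"
      by (simp add: algebra_simps)
    thus ?thesis using ww split yc yd b1 b2 b3 by linarith
  qed
  have "norm w ^ 2 \<le> M * pd * norm w"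
  proof (rule field_le_epsilon)
    fix e :: real assume e: "e > 0"
    define L where "L = 2 * norm y + M * pd"
    have L0: "L \<ge> 0" using M pd0 by (simp add: L_def)
    have \<delta>: "e / (L + 1) > 0" using e L0 by simp
    have "L * (e / (L + 1)) \<le> (L + 1) * (e / (L + 1))"
      using \<delta> by (intro mult_right_mono) auto
    also have "\<dots> = e" using L0 by simp
    finally show "norm w ^ 2 \<le> M * pd * norm w + e"
      using approx[OF \<delta>] unfolding L_def by linarith
  qed
  hence "norm w \<le> M * pd"
    using M by (cases "norm w = 0") (auto simp: power2_eq_square mult_le_cancel_right pd_def)
  thus ?thesis unfolding w_def pd_def .
qed

lemma bounded_decomposition_orth_regular:
  fixes C D :: "'a::{real_inner,complete_space} set"
  assumes C: "clsubspace C" and D: "clsubspace D" and M: "M \<ge> 0"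
    and dec: "bounded_decomposition C D M" and y: "y \<in> orthcompl C"
  shows "infdist y (orthcompl C \<inter> orthcompl D) \<le> M * infdist y (orthcompl D)"
proof -
  define S where "S = closure {c + d | c d. c \<in> C \<and> d \<in> D}"
  have cS: "clsubspace S"
    unfolding S_def clsubspace_def using subspace_closure[OF subspace_sums] C D
    by (auto simp: clsubspace_def)
  have sub: "{c + d | c d. c \<in> C \<and> d \<in> D} \<subseteq> S" unfolding S_def by (rule closure_subset)
  have "C \<subseteq> S"
  proof
    fix c assume "c \<in> C"
    hence "c + 0 \<in> {c + d | c d. c \<in> C \<and> d \<in> D}" using clsubspace_basic[OF D] by blast
    thus "c \<in> S" using sub by auto
  qed
  moreover have "D \<subseteq> S"
  proof
    fix d assume "d \<in> D"
    hence "0 + d \<in> {c + d | c d. c \<in> C \<and> d \<in> D}" using clsubspace_basic[OF C] by blast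
    thus "d \<in> S" using sub by auto
  qed
  ultimately have "y - proj S y \<in> orthcompl C \<inter> orthcompl D"
    using proj_residual_orthcompl[OF cS] by (auto simp: orthcompl_def)
  hence "infdist y (orthcompl C \<inter> orthcompl D) \<le> norm (proj S y)"
    using infdist_le[of "y - proj S y" _ y] by (simp add: dist_norm)
  also have "\<dots> \<le> M * norm (proj D y)" by (rule proj_closure_sum_bound[OF C D M dec y S_def])
  finally show ?thesis using infdist_orthcompl[OF D] by simp
qed

text \<open>Conversely, linear regularity of a pair yields a bounded decomposition:
  shift the common part of the C-summand over to D.\<close>
lemma regular_imp_bounded_decomposition:
  fixes C D :: "'a::{real_inner,complete_space} set"
  assumes C: "clsubspace C" and D: "clsubspace D" and K: "K \<ge> 0"
    and reg: "\<And>y. y \<in> C \<Longrightarrow> infdist y (C \<inter> D) \<le> K * infdist y D"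
  shows "bounded_decomposition C D (1 + K)"
  unfolding bounded_decomposition_def
proof (intro ballI allI impI)
  fix s and e :: real assume s: "s \<in> {c + d | c d. c \<in> C \<and> d \<in> D}" and e: "e > 0"
  then obtain c d where cd: "c \<in> C" "d \<in> D" "s = c + d" by blast
  have CD: "clsubspace (C \<inter> D)" using clsubspace_Int[OF C D] .
  define m where "m = proj (C \<inter> D) c"
  have mCD: "m \<in> C \<inter> D" using proj_in[OF CD] by (simp add: m_def)
  define c' where "c' = c - m"
  define d' where "d' = d + m"
  have c'C: "c' \<in> C" using C cd mCD by (auto simp: c'_def clsubspace_def subspace_diff)
  have d'D: "d' \<in> D" using D cd mCD by (auto simp: d'_def clsubspace_def subspace_add)
  have "proj (C \<inter> D) c' = 0"
    using proj_diff[OF CD, of c m] proj_self[OF CD mCD] by (simp add: c'_def m_def)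
  hence "infdist c' (C \<inter> D) = norm c'" using infdist_clsubspace[OF CD] by simp
  moreover have "-d' \<in> D" using D d'D by (simp add: clsubspace_def subspace_neg)
  hence "infdist c' D \<le> norm s" using infdist_le[of "-d'" D c'] cd(3)
    by (simp add: dist_norm c'_def d'_def algebra_simps)
  ultimately have nc: "norm c' \<le> K * norm s" using reg[OF c'C] K
    by (smt (verit) mult_left_mono)
  have "norm d' = norm (s - c')" by (simp add: cd(3) c'_def d'_def algebra_simps)
  also have "\<dots> \<le> norm s + norm c'" by (rule norm_triangle_ineq4)
  finally have "norm d' \<le> (1 + K) * norm s" using nc by (simp add: algebra_simps)
  moreover have "norm (s - c' - d') \<le> e" using e by (simp add: cd(3) c'_def d'_def)
  ultimately show "\<exists>c\<in>C. \<exists>d\<in>D. norm d \<le> (1 + K) * norm s \<and> norm (s - c - d) \<le> e"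
    using c'C d'D by blast
qed

text \<open>A bounded decomposition of A + B makes both {A, B} and {A-perp, B-perp} linearly
  regular pairs (the first via the complements, using the double complement).\<close>
lemma bounded_decomposition_regular:
  fixes A B :: "'a::{real_inner,complete_space} set"
  assumes A: "clsubspace A" and B: "clsubspace B" and M: "M \<ge> 0"
    and dec: "bounded_decomposition A B M"
  shows "\<And>y. y \<in> A \<Longrightarrow> infdist y (A \<inter> B) \<le> (1 + M) * infdist y B"
    and "\<And>y. y \<in> orthcompl A \<Longrightarrow>
           infdist y (orthcompl A \<inter> orthcompl B) \<le> M * infdist y (orthcompl B)"
proof -
  show orth_reg: "\<And>y. y \<in> orthcompl A \<Longrightarrow>
           infdist y (orthcompl A \<inter> orthcompl B) \<le> M * infdist y (orthcompl B)"
    using bounded_decomposition_orth_regular[OF A B M dec] by blast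
  have "bounded_decomposition (orthcompl A) (orthcompl B) (1 + M)"
    by (rule regular_imp_bounded_decomposition[OF clsubspace_orthcompl clsubspace_orthcompl M orth_reg])
  from bounded_decomposition_orth_regular[OF clsubspace_orthcompl clsubspace_orthcompl _ this]
  show "\<And>y. y \<in> A \<Longrightarrow> infdist y (A \<inter> B) \<le> (1 + M) * infdist y B"
    using M orthcompl_orthcompl[OF A] orthcompl_orthcompl[OF B] by simp
qed

text \<open>Baire category: if A + B is closed, the closed sets
  (A + B) \<inter> closure {a + b | norm b \<le> n} cover the complete space A + B, so one of them
  contains a relative ball.\<close>
lemma closed_sum_Baire_ball:
  fixes A B :: "'a::{real_inner,complete_space} set"
  assumes A: "clsubspace A" and B: "clsubspace B"
    and cl: "closed {a + b | a b. a \<in> A \<and> b \<in> B}"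
  defines "S \<equiv> {a + b | a b. a \<in> A \<and> b \<in> B}"
  shows "\<exists>n::nat. \<exists>s0\<in>S. \<exists>r>0. \<forall>y\<in>S. dist y s0 < r \<longrightarrow>
           y \<in> closure {a + b | a b. a \<in> A \<and> b \<in> B \<and> norm b \<le> real n}"
proof -
  define G where "G n = {a + b | a b. a \<in> A \<and> b \<in> B \<and> norm b \<le> real n}" for n :: nat
  define F where "F n = S \<inter> closure (G n)" for n
  define X where "X = top_of_set S"
  have S0: "0 \<in> S"
    using clsubspace_basic[OF A] clsubspace_basic[OF B] unfolding S_def by force
  have cm: "completely_metrizable_space X"
    unfolding X_def
    by (rule completely_metrizable_space_closedin[OF completely_metrizable_space_euclidean])
       (use cl closed_closedin S_def in auto)
  have cover: "\<Union>(range F) = S"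
  proof
    show "\<Union>(range F) \<subseteq> S" by (auto simp: F_def)
    show "S \<subseteq> \<Union>(range F)"
    proof
      fix s assume "s \<in> S"
      then obtain a b where ab: "a \<in> A" "b \<in> B" "s = a + b" by (auto simp: S_def)
      obtain n :: nat where "norm b \<le> real n" using real_arch_simple by blast
      hence "s \<in> G n" using ab by (auto simp: G_def)
      thus "s \<in> \<Union>(range F)" using \<open>s \<in> S\<close> closure_subset by (auto simp: F_def)
    qed
  qed
  have "\<exists>n. X interior_of F n \<noteq> {}"
  proof (rule ccontr)
    assume "\<not> ?thesis"
    hence "X interior_of \<Union>(range F) = {}"
      using cm closedin_closed_Int[of "closure (G _)" S]
      by (intro Baire_category_alt) (auto simp: X_def F_def)
    moreover have "X interior_of S = S"
      using interior_of_topspace[of X] by (simp add: X_def)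
    ultimately show False using S0 cover by simp
  qed
  then obtain n s0 where s0: "s0 \<in> X interior_of F n" by blast
  have "openin (top_of_set S) (X interior_of F n)" by (simp add: X_def)
  then obtain r where r: "r > 0" "\<And>y. y \<in> S \<Longrightarrow> dist y s0 < r \<Longrightarrow> y \<in> X interior_of F n"
    using s0 unfolding openin_euclidean_subtopology_iff by blast
  moreover have "s0 \<in> S" using s0 interior_of_subset[of X "F n"] by (auto simp: F_def)
  ultimately show ?thesis
    using interior_of_subset[of X "F n"] unfolding F_def G_def by blast
qed

text \<open>Differences of points of the Baire ball give approximate decompositions with a
  uniformly bounded B-part for all small elements of A + B.\<close>
lemma closed_sum_local_decomposition:
  fixes A B :: "'a::{real_inner,complete_space} set"
  assumes A: "clsubspace A" and B: "clsubspace B"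
    and cl: "closed {a + b | a b. a \<in> A \<and> b \<in> B}"
  shows "\<exists>N\<ge>0. \<exists>r>0. \<forall>y \<in> {a + b | a b. a \<in> A \<and> b \<in> B}. norm y < r \<longrightarrow>
           (\<forall>e>0. \<exists>a\<in>A. \<exists>b\<in>B. norm b \<le> N \<and> norm (y - a - b) \<le> e)"
proof -
  define S where "S = {a + b | a b. a \<in> A \<and> b \<in> B}"
  have subS: "subspace S" unfolding S_def using subspace_sums A B by (auto simp: clsubspace_def)
  define G where "G n = {a + b | a b. a \<in> A \<and> b \<in> B \<and> norm b \<le> real n}" for n :: nat
  obtain n s0 r where s0S: "s0 \<in> S" and r: "r > 0"
    and ball: "\<And>y. y \<in> S \<Longrightarrow> dist y s0 < r \<Longrightarrow> y \<in> closure (G n)"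
    using closed_sum_Baire_ball[OF A B cl] unfolding S_def G_def by blast
  have "\<forall>e>0. \<exists>a\<in>A. \<exists>b\<in>B. norm b \<le> 2 * real n \<and> norm (y - a - b) \<le> e"
    if y: "y \<in> S" "norm y < r" for y
  proof (intro allI impI)
    fix e :: real assume e: "e > 0"
    have "s0 + y \<in> S" using subS s0S y by (simp add: subspace_add)
    hence "s0 + y \<in> closure (G n)" using ball y by (simp add: dist_norm)
    then obtain g1 where g1: "g1 \<in> G n" "dist g1 (s0 + y) < e/2"
      using e unfolding closure_approachable by (meson half_gt_zero)
    have "s0 \<in> closure (G n)" using ball s0S r by simp
    then obtain g2 where g2: "g2 \<in> G n" "dist g2 s0 < e/2"
      using e unfolding closure_approachable by (meson half_gt_zero)
    obtain a1 b1 where 1: "a1 \<in> A" "b1 \<in> B" "norm b1 \<le> n" "g1 = a1 + b1" using g1 by (auto simp: G_def)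
    obtain a2 b2 where 2: "a2 \<in> A" "b2 \<in> B" "norm b2 \<le> n" "g2 = a2 + b2" using g2 by (auto simp: G_def)
    have aA: "a1 - a2 \<in> A" using A 1 2 by (simp add: clsubspace_def subspace_diff)
    have bB: "b1 - b2 \<in> B" using B 1 2 by (simp add: clsubspace_def subspace_diff)
    have nb: "norm (b1 - b2) \<le> 2 * real n"
      using norm_triangle_ineq4[of b1 b2] 1 2 by simp
    have "y - (a1 - a2) - (b1 - b2) = (g2 - s0) - (g1 - (s0 + y))"
      using 1 2 by (simp add: algebra_simps)
    hence "norm (y - (a1 - a2) - (b1 - b2)) \<le> norm (g2 - s0) + norm (g1 - (s0 + y))"
      by (metis norm_triangle_ineq4)
    also have "\<dots> \<le> e" using g1(2) g2(2) by (simp add: dist_norm)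
    finally show "\<exists>a\<in>A. \<exists>b\<in>B. norm b \<le> 2 * real n \<and> norm (y - a - b) \<le> e"
      using aA bB nb by blast
  qed
  thus ?thesis using r unfolding S_def by (intro exI[of _ "2 * real n"] exI[of _ r]) auto
qed

text \<open>By homogeneity the local decomposition extends to all of A + B: a closed sum of
  closed subspaces has a bounded decomposition.\<close>
lemma closed_sum_bounded_decomposition:
  fixes A B :: "'a::{real_inner,complete_space} set"
  assumes A: "clsubspace A" and B: "clsubspace B"
    and cl: "closed {a + b | a b. a \<in> A \<and> b \<in> B}"
  shows "\<exists>M\<ge>0. bounded_decomposition A B M"
proof -
  define S where "S = {a + b | a b. a \<in> A \<and> b \<in> B}"
  have subS: "subspace S" unfolding S_def using subspace_sums A B by (auto simp: clsubspace_def)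
  obtain N r where N: "N \<ge> 0" and r: "r > 0" and small:
    "\<forall>y\<in>S. norm y < r \<longrightarrow> (\<forall>e>0. \<exists>a\<in>A. \<exists>b\<in>B. norm b \<le> N \<and> norm (y - a - b) \<le> e)"
    using closed_sum_local_decomposition[OF A B cl] unfolding S_def by blast
  define M where "M = 2 * N / r"
  have "bounded_decomposition A B M"
    unfolding bounded_decomposition_def
  proof (intro ballI allI impI)
    fix s and e :: real assume sS: "s \<in> {c + d | c d. c \<in> A \<and> d \<in> B}" and e: "e > 0"
    show "\<exists>c\<in>A. \<exists>d\<in>B. norm d \<le> M * norm s \<and> norm (s - c - d) \<le> e"
    proof (cases "s = 0")
      case True thus ?thesis using clsubspace_basic[OF A] clsubspace_basic[OF B] e
        by (intro bexI[of _ 0]) auto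
    next
      case False
      define l where "l = r / (2 * norm s)"
      have l0: "l > 0" using False r by (simp add: l_def)
      have "s \<in> S" using sS by (simp add: S_def)
      hence "l *\<^sub>R s \<in> S" using subS by (simp add: subspace_scale)
      moreover have "norm (l *\<^sub>R s) < r" using False r l0 by (simp add: l_def)
      ultimately obtain a b where ab: "a \<in> A" "b \<in> B" "norm b \<le> N"
          "norm (l *\<^sub>R s - a - b) \<le> l * e"
        using small e l0 by (meson mult_pos_pos)
      define c where "c = (1/l) *\<^sub>R a"
      define d where "d = (1/l) *\<^sub>R b"
      have cA: "c \<in> A" using A ab by (simp add: c_def clsubspace_def subspace_scale)
      have dB: "d \<in> B" using B ab by (simp add: d_def clsubspace_def subspace_scale)
      have "norm d = norm b / l" using l0 by (simp add: d_def)
      also have "\<dots> \<le> N / l" using ab(3) l0 by (simp add: divide_right_mono)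
      also have "\<dots> = M * norm s" using False r by (simp add: l_def M_def field_simps)
      finally have nd: "norm d \<le> M * norm s" .
      have "s - c - d = (1/l) *\<^sub>R (l *\<^sub>R s - a - b)"
        using l0 by (simp add: c_def d_def algebra_simps)
      hence "norm (s - c - d) = norm (l *\<^sub>R s - a - b) / l" using l0 by simp
      also have "\<dots> \<le> e" using ab(4) l0 by (simp add: pos_divide_le_eq mult.commute)
      finally show ?thesis using cA dB nd by blast
    qed
  qed
  moreover have "M \<ge> 0" using N r by (simp add: M_def)
  ultimately show ?thesis by blast
qed

section \<open>The Douglas-Rachford operator of two closed subspaces\<close>

definition douglas_rachford :: "'a::real_inner set \<Rightarrow> 'a set \<Rightarrow> 'a \<Rightarrow> 'a" where
  "douglas_rachford A B x = proj B (reflector A x) + x - proj A x"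

lemma douglas_rachford_expand:
  fixes A B :: "'a::{real_inner,complete_space} set"
  assumes B: "clsubspace B"
  shows "douglas_rachford A B x = 2 *\<^sub>R proj B (proj A x) - proj B x + x - proj A x"
  by (simp add: douglas_rachford_def reflector_def proj_diff[OF B] proj_scale[OF B])

lemma douglas_rachford_diff:
  fixes A B :: "'a::{real_inner,complete_space} set"
  assumes A: "clsubspace A" and B: "clsubspace B"
  shows "douglas_rachford A B (x - y) = douglas_rachford A B x - douglas_rachford A B y"
  by (simp add: douglas_rachford_expand[OF B] proj_diff[OF A] proj_diff[OF B] algebra_simps)

lemma norm_reflector:
  fixes A :: "'a::{real_inner,complete_space} set"
  assumes A: "clsubspace A"
  shows "norm (reflector A v) = norm v"
proof -
  define w where "w = v - proj A v"
  have "inner w (proj A v) = 0" using proj_orth[OF A proj_in[OF A]] by (simp add: w_def)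
  hence o: "orthogonal (proj A v) w" "orthogonal (proj A v) (- w)"
    by (simp_all add: inner_commute orthogonal_def)
  have "reflector A v = proj A v + (- w)" by (simp add: reflector_def w_def scaleR_2 algebra_simps)
  hence "norm (reflector A v)^2 = norm (proj A v)^2 + norm w^2"
    using norm_add_Pythagorean[OF o(2)] by simp
  moreover have "norm v^2 = norm (proj A v)^2 + norm w^2"
    using norm_add_Pythagorean[OF o(1)] by (simp add: w_def)
  ultimately show ?thesis by (metis norm_ge_zero power2_eq_iff_nonneg)
qed

lemma parallelogram_identity:
  fixes a b :: "'a::real_inner"
  shows "norm (a + b)^2 + norm (a - b)^2 = 2 * norm a^2 + 2 * norm b^2"
  unfolding power2_norm_eq_inner by (simp add: inner_add_left inner_add_right inner_diff_left
      inner_diff_right inner_commute)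

text \<open>The operator is firmly nonexpansive: it is the average of the identity and the
  isometry R_B R_A.\<close>
lemma douglas_rachford_firm:
  fixes A B :: "'a::{real_inner,complete_space} set"
  assumes A: "clsubspace A" and B: "clsubspace B"
  shows "norm (douglas_rachford A B u)^2 + norm (u - douglas_rachford A B u)^2 \<le> norm u^2"
proof -
  define N where "N = reflector B (reflector A u)"
  have nN: "norm N = norm u" using norm_reflector[OF A] norm_reflector[OF B] by (simp add: N_def)
  have hN: "N = 2 *\<^sub>R (2 *\<^sub>R proj B (proj A u) - proj B u) - (2 *\<^sub>R proj A u - u)"
    by (simp add: N_def reflector_def proj_diff[OF B] proj_scale[OF B])
  have avg: "2 *\<^sub>R douglas_rachford A B u = u + N"
    unfolding hN douglas_rachford_expand[OF B] by (simp only: scaleR_2) (simp add: algebra_simps)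
  hence half: "douglas_rachford A B u = (1/2) *\<^sub>R (u + N)"
    by (metis scaleR_scaleR nonzero_divide_eq_eq scaleR_one zero_neq_numeral)
  have "u - douglas_rachford A B u = (1/2) *\<^sub>R (2 *\<^sub>R u - (u + N))"
    unfolding half by (simp add: scaleR_right_diff_distrib)
  also have "2 *\<^sub>R u - (u + N) = u - N" by (simp add: scaleR_2)
  finally have n2: "norm (u - douglas_rachford A B u) = norm (u - N) / 2" by simp
  have n1: "norm (douglas_rachford A B u) = norm (u + N) / 2" unfolding half by simp
  have "norm (douglas_rachford A B u)^2 + norm (u - douglas_rachford A B u)^2
         = (norm (u + N)^2 + norm (u - N)^2) / 4"
    unfolding n1 n2 by (simp add: power_divide add_divide_distrib)
  also have "\<dots> = norm u^2" using parallelogram_identity[of u N] nN by simp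
  finally show ?thesis by simp
qed

text \<open>Being linear and firmly nonexpansive, the operator is strongly quasi-nonexpansive
  with respect to each of its fixed points.\<close>
lemma douglas_rachford_fixed_point_ineq:
  fixes A B :: "'a::{real_inner,complete_space} set"
  assumes A: "clsubspace A" and B: "clsubspace B" and z: "z \<in> Fix (douglas_rachford A B)"
  shows "norm (douglas_rachford A B x - z)^2 + norm (x - douglas_rachford A B x)^2
         \<le> norm (x - z)^2"
proof -
  have "douglas_rachford A B (x - z) = douglas_rachford A B x - z"
    using douglas_rachford_diff[OF A B] z by (simp add: Fix_def)
  moreover have "(x - z) - (douglas_rachford A B x - z) = x - douglas_rachford A B x" by simp
  ultimately show ?thesis using douglas_rachford_firm[OF A B, of "x - z"] by simp
qed

lemma douglas_rachford_fix:
  fixes A B :: "'a::{real_inner,complete_space} set"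
  assumes A: "clsubspace A" and B: "clsubspace B"
    and p: "p \<in> A \<inter> B" and q: "q \<in> orthcompl A \<inter> orthcompl B"
  shows "p + q \<in> Fix (douglas_rachford A B)"
proof -
  have pa: "proj A (p + q) = p"
    by (rule proj_eqI[OF A]) (use p q in \<open>auto simp: orthcompl_def\<close>)
  have pb: "proj B (p - q) = p"
    by (rule proj_eqI[OF B]) (use p q in \<open>auto simp: orthcompl_def inner_minus_left\<close>)
  have "reflector A (p + q) = p - q" by (simp add: reflector_def pa scaleR_2)
  thus ?thesis by (simp add: Fix_def douglas_rachford_def pa pb)
qed

text \<open>The residual x - T x splits orthogonally into a part in B-perp, measuring the
  distance of P_A x to B, and a part in B, measuring the distance of x - P_A x to B-perp.\<close>
lemma douglas_rachford_residual:
  fixes A B :: "'a::{real_inner,complete_space} set"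
  assumes B: "clsubspace B"
  shows "x - douglas_rachford A B x = (proj A x - proj B (proj A x)) + proj B (x - proj A x)"
proof -
  have "reflector A x = proj A x - (x - proj A x)" by (simp add: reflector_def scaleR_2)
  thus ?thesis by (simp add: douglas_rachford_def proj_diff[OF B])
qed

text \<open>The fixed point candidate is the
  sum of the projections of P_A x onto A \<inter> B and of x - P_A x onto A-perp \<inter> B-perp.\<close>
lemma douglas_rachford_regular:
  fixes A B :: "'a::{real_inner,complete_space} set"
  assumes A: "clsubspace A" and B: "clsubspace B"
    and cl: "closed {a + b | a b. a \<in> A \<and> b \<in> B}"
  shows "\<exists>K\<ge>0. \<forall>x. infdist x (Fix (douglas_rachford A B)) \<le> K * norm (x - douglas_rachford A B x)"
proof -
  obtain M where M: "M \<ge> 0" "bounded_decomposition A B M"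
    using closed_sum_bounded_decomposition[OF A B cl] by blast
  note reg = bounded_decomposition_regular[OF A B M]
  have "infdist x (Fix (douglas_rachford A B)) \<le> (1 + 2*M) * norm (x - douglas_rachford A B x)"
    for x
  proof -
    define a where "a = proj A x"
    define a' where "a' = x - a"
    define u where "u = a - proj B a"
    define v where "v = proj B a'"
    have aA: "a \<in> A" using proj_in[OF A] by (simp add: a_def)
    have a'A: "a' \<in> orthcompl A" using proj_residual_orthcompl[OF A] by (simp add: a'_def a_def)
    have "orthogonal u v"
      using proj_residual_orthcompl[OF B, of a] proj_in[OF B, of a']
      by (simp add: u_def v_def orthcompl_def orthogonal_def)
    hence "norm (u + v)^2 = norm u^2 + norm v^2" by (rule norm_add_Pythagorean)
    hence "norm u^2 \<le> norm (u + v)^2" "norm v^2 \<le> norm (u + v)^2" by simp_all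
    hence nu: "norm u \<le> norm (u + v)" and nv: "norm v \<le> norm (u + v)"
      using power2_le_imp_le norm_ge_zero by blast+
    define p where "p = proj (A \<inter> B) a"
    define q where "q = proj (orthcompl A \<inter> orthcompl B) a'"
    have cAB: "clsubspace (A \<inter> B)" "clsubspace (orthcompl A \<inter> orthcompl B)"
      using clsubspace_Int clsubspace_orthcompl A B by blast+
    have "p + q \<in> Fix (douglas_rachford A B)"
      using douglas_rachford_fix[OF A B] proj_in[OF cAB(1)] proj_in[OF cAB(2)] by (simp add: p_def q_def)
    hence "infdist x (Fix (douglas_rachford A B)) \<le> dist x (p + q)" by (rule infdist_le)
    also have "\<dots> \<le> norm (a - p) + norm (a' - q)"
      using norm_triangle_ineq[of "a - p" "a' - q"] by (simp add: dist_norm a'_def algebra_simps)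
    also have "norm (a - p) = infdist a (A \<inter> B)"
      using infdist_clsubspace[OF cAB(1)] by (simp add: p_def)
    also have "\<dots> \<le> (1 + M) * norm u"
      using reg(1)[OF aA] infdist_clsubspace[OF B] by (simp add: u_def)
    also have "norm (a' - q) = infdist a' (orthcompl A \<inter> orthcompl B)"
      using infdist_clsubspace[OF cAB(2)] by (simp add: q_def)
    also have "\<dots> \<le> M * norm v"
      using reg(2)[OF a'A] infdist_orthcompl[OF B] by (simp add: v_def)
    also have "(1 + M) * norm u + M * norm v \<le> (1 + M) * norm (u + v) + M * norm (u + v)"
      using nu nv M by (intro add_mono mult_left_mono) auto
    also have "u + v = x - douglas_rachford A B x"
      using douglas_rachford_residual[OF B] by (simp add: u_def v_def a_def a'_def)
    finally show ?thesis by (simp add: algebra_simps)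
  qed
  moreover have "1 + 2*M \<ge> 0" using M by simp
  ultimately show ?thesis by blast
qed

section \<open>Compositions of strongly quasi-nonexpansive, linearly regular operators\<close>

text \<open>Telescoping the strong quasi-nonexpansiveness of T_1, ..., T_k: the squared steps of
  the partial compositions are paid for by the decrease of the distance to a common
  fixed point z.\<close>
lemma comp_upto_fixed_point_ineq:
  fixes T :: "nat \<Rightarrow> 'a::real_inner \<Rightarrow> 'a"
  assumes sqne: "\<And>i x. i \<in> {1..m} \<Longrightarrow> norm (T i x - z)^2 + norm (x - T i x)^2 \<le> norm (x - z)^2"
    and k: "k \<le> m"
  shows "norm (comp_upto T k x - z)^2
     + (\<Sum>j\<in>{1..k}. norm (comp_upto T (j-1) x - comp_upto T j x)^2) \<le> norm (x - z)^2"
  using k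
proof (induction k)
  case 0 thus ?case by simp
next
  case (Suc k)
  have "norm (comp_upto T (Suc k) x - z)^2 + norm (comp_upto T k x - comp_upto T (Suc k) x)^2
        \<le> norm (comp_upto T k x - z)^2"
    using sqne[of "Suc k" "comp_upto T k x"] Suc.prems by simp
  thus ?case using Suc by simp
qed

lemma comp_upto_displacement:
  fixes T :: "nat \<Rightarrow> 'a::real_normed_vector \<Rightarrow> 'a"
  shows "norm (x - comp_upto T k x) \<le> (\<Sum>j\<in>{1..k}. norm (comp_upto T (j-1) x - comp_upto T j x))"
proof (induction k)
  case 0 thus ?case by simp
next
  case (Suc k)
  have "norm (x - comp_upto T (Suc k) x)
      \<le> norm (x - comp_upto T k x) + norm (comp_upto T k x - comp_upto T (Suc k) x)"
    by (rule norm_diff_triangle_le[of _ "comp_upto T k x"]) simp_all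
  thus ?case using Suc.IH by simp
qed

text \<open>Each term of a finite sum is bounded by the root of the sum of squares.\<close>
lemma sum_le_card_sqrt_sum_squares:
  fixes f :: "'i \<Rightarrow> real"
  assumes "finite I"
  shows "(\<Sum>j\<in>I. f j) \<le> real (card I) * sqrt (\<Sum>j\<in>I. (f j)^2)"
proof -
  have "f j \<le> sqrt (\<Sum>j\<in>I. (f j)^2)" if "j \<in> I" for j
  proof (rule real_le_rsqrt)
    show "(f j)^2 \<le> (\<Sum>j\<in>I. (f j)^2)" by (rule member_le_sum) (use that assms in auto)
  qed
  thus ?thesis by (rule sum_bounded_above)
qed

lemma comp_upto_regular_distances:
  fixes T :: "nat \<Rightarrow> 'a::real_normed_vector \<Rightarrow> 'a"
  assumes K: "K \<ge> 0"
    and reg: "\<And>i x. i \<in> {1..m} \<Longrightarrow> infdist x (Z i) \<le> K * norm (x - T i x)"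
    and i: "i \<in> {1..m}"
  shows "infdist x (Z i) \<le> (1 + K) * (\<Sum>j\<in>{1..m}. norm (comp_upto T (j-1) x - comp_upto T j x))"
proof -
  define \<delta> where "\<delta> j = norm (comp_upto T (j-1) x - comp_upto T j x)" for j
  define D where "D = (\<Sum>j\<in>{1..m}. \<delta> j)"
  have d0: "\<delta> j \<ge> 0" for j by (simp add: \<delta>_def)
  have step: "comp_upto T i x = T i (comp_upto T (i-1) x)" using i by (cases i) auto
  have "infdist x (Z i) \<le> infdist (comp_upto T (i-1) x) (Z i) + dist x (comp_upto T (i-1) x)"
    by (rule infdist_triangle)
  also have "infdist (comp_upto T (i-1) x) (Z i) \<le> K * \<delta> i"
    using reg[OF i] step by (simp add: \<delta>_def)
  also have "\<dots> \<le> K * D"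
    unfolding D_def using K i d0 by (intro mult_left_mono member_le_sum) auto
  also have "dist x (comp_upto T (i-1) x) \<le> (\<Sum>j\<in>{1..i-1}. \<delta> j)"
    using comp_upto_displacement[of x T "i-1"] by (simp add: dist_norm \<delta>_def)
  also have "\<dots> \<le> D" unfolding D_def by (rule sum_mono2) (use i d0 in auto)
  finally show ?thesis by (simp add: D_def \<delta>_def algebra_simps)
qed

text \<open>Key estimate: on a bounded set the composition shrinks the distance to the common
  fixed point set W by a uniform factor q < 1.  The decrease of the squared distance
  is the sum of squared steps, which by regularity dominates a fixed fraction of it.\<close>
lemma comp_upto_distance_contraction:
  fixes T :: "nat \<Rightarrow> 'a::{real_inner,complete_space} \<Rightarrow> 'a" and Z :: "nat \<Rightarrow> 'a set"
  assumes m: "m \<ge> 1"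
    and sqne: "\<And>i x z. i \<in> {1..m} \<Longrightarrow> z \<in> Z i \<Longrightarrow>
                 norm (T i x - z)^2 + norm (x - T i x)^2 \<le> norm (x - z)^2"
    and K: "K \<ge> 0" and reg: "\<And>i x. i \<in> {1..m} \<Longrightarrow> infdist x (Z i) \<le> K * norm (x - T i x)"
    and blr: "boundedly_linearly_regular {1..m} Z"
    and rho: "\<rho> > 0"
  defines "W \<equiv> \<Inter>i\<in>{1..m}. Z i"
  shows "\<exists>q. 0 \<le> q \<and> q < 1 \<and>
           (\<forall>x. norm x \<le> \<rho> \<longrightarrow> infdist (comp_upto T m x) W \<le> q * infdist x W)"
proof -
  have Zcc: "\<And>i. i \<in> {1..m} \<Longrightarrow> closed (Z i) \<and> convex (Z i)" and Wne: "W \<noteq> {}"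
    using blr unfolding boundedly_linearly_regular_def W_def by auto
  have Wcl: "closed W" and Wcv: "convex W"
    using Zcc by (auto simp: W_def intro!: closed_INT convex_INT)
  obtain \<mu> where mu: "\<mu> > 0"
    "\<And>x. norm x \<le> \<rho> \<Longrightarrow> infdist x W \<le> \<mu> * Max ((\<lambda>i. infdist x (Z i)) ` {1..m})"
    using blr rho unfolding boundedly_linearly_regular_def W_def by blast
  define L where "L = (\<mu> * (1 + K) * real m)^2"
  have L0: "L > 0" using mu K m by (simp add: L_def)
  define q where "q = sqrt (max 0 (1 - 1/L))"
  have "infdist (comp_upto T m x) W \<le> q * infdist x W" if xr: "norm x \<le> \<rho>" for x
  proof -
    define E where "E = (\<Sum>j\<in>{1..m}. norm (comp_upto T (j-1) x - comp_upto T j x)^2)"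
    have E0: "E \<ge> 0" by (simp add: E_def sum_nonneg)
    have "Max ((\<lambda>i. infdist x (Z i)) ` {1..m})
          \<le> (1 + K) * (\<Sum>j\<in>{1..m}. norm (comp_upto T (j-1) x - comp_upto T j x))"
      using comp_upto_regular_distances[where T=T and Z=Z and m=m, OF K reg] m by (subst Max_le_iff) auto
    also have "\<dots> \<le> (1 + K) * (real m * sqrt E)"
      using sum_le_card_sqrt_sum_squares[of "{1..m}"] K by (intro mult_left_mono) (auto simp: E_def)
    finally have "\<mu> * Max ((\<lambda>i. infdist x (Z i)) ` {1..m}) \<le> \<mu> * ((1 + K) * (real m * sqrt E))"
      using mu(1) by (intro mult_left_mono) auto
    with mu(2)[OF xr] have "infdist x W \<le> \<mu> * ((1 + K) * (real m * sqrt E))"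
      by (rule order_trans)
    also have "\<dots> = sqrt L * sqrt E" using mu K by (simp add: L_def abs_mult)
    finally have "(infdist x W)^2 \<le> (sqrt L * sqrt E)^2"
      by (intro power_mono) (auto simp: infdist_nonneg)
    also have "\<dots> = E * L" using L0 E0 by (simp add: power_mult_distrib mult.commute)
    finally have dE: "(infdist x W)^2 / L \<le> E" using pos_divide_le_eq[OF L0] by blast
    define p where "p = proj W x"
    have pW: "p \<in> W" using proj_nearest(1)[OF Wcl Wcv Wne] by (simp add: p_def)
    have dp: "infdist x W = norm (x - p)"
      using infdist_proj[OF Wcl Wcv Wne] by (simp add: p_def dist_norm)
    have "norm (comp_upto T m x - p)^2 + E \<le> norm (x - p)^2"
      unfolding E_def by (rule comp_upto_fixed_point_ineq[where m=m and k=m and z=p]) (use sqne pW in \<open>auto simp: W_def\<close>)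
    hence gap: "norm (comp_upto T m x - p)^2 \<le> (infdist x W)^2 - E" using dp by simp
    have "(infdist (comp_upto T m x) W)^2 \<le> norm (comp_upto T m x - p)^2"
      using infdist_le[OF pW, of "comp_upto T m x"]
      by (intro power_mono) (auto simp: dist_norm infdist_nonneg)
    also have "\<dots> \<le> (1 - 1/L) * (infdist x W)^2" using gap dE by (simp add: algebra_simps)
    also have "\<dots> \<le> (q * infdist x W)^2"
    proof -
      have "1 - 1/L \<le> q^2" by (simp add: q_def)
      thus ?thesis by (simp add: power_mult_distrib mult_right_mono)
    qed
    finally show ?thesis
      by (rule power2_le_imp_le) (simp add: q_def infdist_nonneg)
  qed
  moreover have "0 \<le> q" "q < 1" using L0 by (auto simp: q_def)
  ultimately show ?thesis by blast
qed

section \<open>Linear convergence of Fejer monotone sequences\<close>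

lemma fejer_tail_bound:
  fixes x :: "nat \<Rightarrow> 'a::{real_inner,complete_space}"
  assumes Wcl: "closed W" and Wcv: "convex W" and Wne: "W \<noteq> {}"
    and fejer: "\<And>n z. z \<in> W \<Longrightarrow> norm (x (Suc n) - z) \<le> norm (x n - z)"
  shows "norm (x (k + n) - x n) \<le> 2 * infdist (x n) W"
proof -
  define p where "p = proj W (x n)"
  have pW: "p \<in> W" using proj_nearest(1)[OF Wcl Wcv Wne] by (simp add: p_def)
  have mono: "norm (x (j + n) - p) \<le> norm (x n - p)" for j
    by (induction j) (use fejer[OF pW] order_trans in auto)
  have "norm (x (k + n) - x n) \<le> norm (x (k + n) - p) + norm (x n - p)"
    using norm_triangle_ineq4[of "x (k + n) - p" "x n - p"] by simp
  also have "\<dots> \<le> 2 * norm (x n - p)" using mono[of k] by simp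
  also have "norm (x n - p) = infdist (x n) W"
    using infdist_proj[OF Wcl Wcv Wne] by (simp add: p_def dist_norm)
  finally show ?thesis .
qed

lemma fejer_linear_convergence:
  fixes x :: "nat \<Rightarrow> 'a::{real_inner,complete_space}"
  assumes Wcl: "closed W" and Wcv: "convex W" and Wne: "W \<noteq> {}"
    and fejer: "\<And>n z. z \<in> W \<Longrightarrow> norm (x (Suc n) - z) \<le> norm (x n - z)"
    and q: "0 \<le> q" "q < 1"
    and decay: "\<And>n. infdist (x (Suc n)) W \<le> q * infdist (x n) W"
  shows "\<exists>z\<in>W. converges_linearly x z"
proof -
  define d0 where "d0 = infdist (x 0) W"
  have d00: "d0 \<ge> 0" by (simp add: d0_def infdist_nonneg)
  have dn: "infdist (x n) W \<le> q^n * d0" for n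
  proof (induction n)
    case 0 thus ?case by (simp add: d0_def)
  next
    case (Suc n)
    have "infdist (x (Suc n)) W \<le> q * infdist (x n) W" by (rule decay)
    also have "\<dots> \<le> q * (q^n * d0)" using Suc.IH q by (intro mult_left_mono) auto
    finally show ?case by simp
  qed
  have tail: "norm (x (k + n) - x n) \<le> 2 * (q^n * d0)" for k n
    using fejer_tail_bound[where x=x, OF Wcl Wcv Wne fejer, of k n] dn[of n] by simp
  have qlim: "(\<lambda>n. q^n * c) \<longlonglongrightarrow> 0" for c :: real
    using tendsto_mult[OF LIMSEQ_power_zero[of q] tendsto_const[of c]] q by simp
  have "Cauchy x"
  proof (rule metric_CauchyI)
    fix e :: real assume e: "e > 0"
    obtain N where N: "q^N * (4 * d0) < e"
      using order_tendstoD(2)[OF qlim e] by (auto simp: eventually_sequentially)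
    have "dist (x a) (x b) < e" if "N \<le> a" "N \<le> b" for a b
    proof -
      have "dist (x a) (x b) \<le> norm (x a - x N) + norm (x b - x N)"
        using norm_triangle_ineq4[of "x a - x N" "x b - x N"] by (simp add: dist_norm)
      also have "\<dots> \<le> q^N * (4 * d0)"
        using tail[of "a - N" N] tail[of "b - N" N] that by simp
      finally show ?thesis using N by simp
    qed
    thus "\<exists>M. \<forall>m\<ge>M. \<forall>n\<ge>M. dist (x m) (x n) < e" by blast
  qed
  then obtain z where xz: "x \<longlonglongrightarrow> z" using Cauchy_convergent_iff convergent_def by blast
  have rate: "norm (x n - z) \<le> 2 * d0 * q^n" for n
  proof -
    have "(\<lambda>k. norm (x (k + n) - x n)) \<longlonglongrightarrow> norm (z - x n)"
      by (intro tendsto_intros LIMSEQ_ignore_initial_segment xz)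
    hence "norm (z - x n) \<le> 2 * (q^n * d0)"
      by (rule LIMSEQ_le_const2) (use tail in blast)
    thus ?thesis by (simp add: norm_minus_commute algebra_simps)
  qed
  have "infdist z W \<le> q^n * (3 * d0)" for n
  proof -
    have "infdist z W \<le> infdist (x n) W + dist z (x n)" by (rule infdist_triangle)
    thus ?thesis using dn[of n] rate[of n] by (simp add: dist_norm norm_minus_commute algebra_simps)
  qed
  hence "infdist z W \<le> 0" by (intro LIMSEQ_le_const[OF qlim[of "3 * d0"]]) auto
  hence "z \<in> W"
    using infdist_nonneg[of z W] in_closed_iff_infdist_zero[OF Wcl Wne] by simp
  moreover have "converges_linearly x z"
    unfolding converges_linearly_def using d00 q rate by (intro exI[of _ "2 * d0"] exI[of _ q]) auto
  ultimately show ?thesis by blast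
qed

section \<open>Linear convergence of compositions\<close>

lemma comp_upto_linear_convergence:
  fixes T :: "nat \<Rightarrow> 'a::{real_inner,complete_space} \<Rightarrow> 'a" and Z :: "nat \<Rightarrow> 'a set"
  assumes m: "m \<ge> 1"
    and sqne: "\<And>i x z. i \<in> {1..m} \<Longrightarrow> z \<in> Z i \<Longrightarrow>
                 norm (T i x - z)^2 + norm (x - T i x)^2 \<le> norm (x - z)^2"
    and reg: "\<And>i. i \<in> {1..m} \<Longrightarrow> \<exists>K\<ge>0. \<forall>x. infdist x (Z i) \<le> K * norm (x - T i x)"
    and blr: "boundedly_linearly_regular {1..m} Z"
  shows "\<exists>z \<in> (\<Inter>i\<in>{1..m}. Z i). converges_linearly (\<lambda>n. (comp_upto T m ^^ n) x0) z"
proof -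
  define W where "W = (\<Inter>i\<in>{1..m}. Z i)"
  define x where "x n = (comp_upto T m ^^ n) x0" for n
  have Zcc: "\<And>i. i \<in> {1..m} \<Longrightarrow> closed (Z i) \<and> convex (Z i)" and Wne: "W \<noteq> {}"
    using blr unfolding boundedly_linearly_regular_def W_def by auto
  have Wcl: "closed W" and Wcv: "convex W"
    using Zcc by (auto simp: W_def intro!: closed_INT convex_INT)
  from reg obtain Kf where Kf: "\<And>i. i \<in> {1..m} \<Longrightarrow>
      Kf i \<ge> 0 \<and> (\<forall>x. infdist x (Z i) \<le> Kf i * norm (x - T i x))"
    by metis
  define K where "K = (\<Sum>i\<in>{1..m}. Kf i)"
  have K: "K \<ge> 0" unfolding K_def by (rule sum_nonneg) (use Kf in blast)
  have regK: "infdist y (Z i) \<le> K * norm (y - T i y)" if i: "i \<in> {1..m}" for i y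
  proof -
    have "Kf i \<le> K" unfolding K_def by (rule member_le_sum) (use i Kf in auto)
    thus ?thesis using Kf[OF i] by (meson mult_right_mono norm_ge_zero order_trans)
  qed
  have fejer: "norm (x (Suc n) - z) \<le> norm (x n - z)" if z: "z \<in> W" for n z
  proof -
    have "norm (x (Suc n) - z)^2
          + (\<Sum>j\<in>{1..m}. norm (comp_upto T (j-1) (x n) - comp_upto T j (x n))^2)
          \<le> norm (x n - z)^2"
      unfolding x_def funpow.simps o_apply
      by (rule comp_upto_fixed_point_ineq[where m=m and k=m and z=z]) (use sqne z in \<open>auto simp: W_def\<close>)
    moreover have "(\<Sum>j\<in>{1..m}. norm (comp_upto T (j-1) (x n) - comp_upto T j (x n))^2) \<ge> 0"
      by (rule sum_nonneg) simp
    ultimately have "norm (x (Suc n) - z)^2 \<le> norm (x n - z)^2" by linarith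
    thus ?thesis by (rule power2_le_imp_le) simp
  qed
  obtain z0 where z0: "z0 \<in> W" using Wne by blast
  define \<rho> where "\<rho> = norm (x0 - z0) + norm z0 + 1"
  have bounded: "norm (x n) \<le> \<rho>" for n
  proof -
    have "norm (x n - z0) \<le> norm (x0 - z0)"
      by (induction n) (use fejer[OF z0] order_trans in \<open>auto simp: x_def\<close>)
    thus ?thesis using norm_triangle_ineq2[of "x n" z0] by (simp add: \<rho>_def)
  qed
  have "\<rho> > 0" unfolding \<rho>_def by (simp add: add_nonneg_pos)
  then obtain q where q: "0 \<le> q" "q < 1"
    and contr: "\<And>y. norm y \<le> \<rho> \<Longrightarrow> infdist (comp_upto T m y) W \<le> q * infdist y W"
    using comp_upto_distance_contraction[OF m sqne K regK blr] unfolding W_def by blast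
  have "infdist (x (Suc n)) W \<le> q * infdist (x n) W" for n
    using contr[OF bounded[of n]] by (simp add: x_def)
  from fejer_linear_convergence[where x=x, OF Wcl Wcv Wne fejer q this]
  moreover have "x = (\<lambda>n. (comp_upto T m ^^ n) x0)" by (simp add: fun_eq_iff x_def)
  ultimately show ?thesis by (simp add: W_def)
qed

section \<open>The cyclic Douglas-Rachford method\<close>

theorem corollary8p3:
  fixes U :: "nat \<Rightarrow> 'a::{real_inner, complete_space} set"
    and m :: nat
    and T :: "nat \<Rightarrow> 'a \<Rightarrow> 'a"
    and Z :: "nat \<Rightarrow> 'a set"
  assumes m: "m \<ge> 1"
    and subsp: "\<And>i. i \<in> {1..m} \<Longrightarrow> subspace (U i) \<and> closed (U i)"
    and wrap: "U (m + 1) = U 1"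
    and sumclosed: "\<And>i. i \<in> {1..m} \<Longrightarrow> closed {u + v | u v. u \<in> U i \<and> v \<in> U (i + 1)}"
    and T_def: "\<And>i. i \<in> {1..m} \<Longrightarrow>
                  T i = (\<lambda>x. proj (U (i + 1)) (reflector (U i) x) + x - proj (U i) x)"
    and Z_def: "\<And>i. i \<in> {1..m} \<Longrightarrow> Z i = Fix (T i)"
    and blr: "boundedly_linearly_regular {1..m} Z"
  shows "\<forall>x0. \<exists>z \<in> (\<Inter>i\<in>{1..m}. Z i).
           converges_linearly (\<lambda>n. (comp_upto T m ^^ n) x0) z"
proof
  fix x0 :: 'a
  have U: "clsubspace (U i)" "clsubspace (U (i + 1))" if i: "i \<in> {1..m}" for i
  proof -
    have "i + 1 \<in> {1..m} \<or> U (i + 1) = U 1" using i wrap by (cases "i = m") auto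
    thus "clsubspace (U i)" "clsubspace (U (i + 1))"
      using subsp i m by (auto simp: clsubspace_def)
  qed
  have TD: "T i = douglas_rachford (U i) (U (i + 1))" if "i \<in> {1..m}" for i
    using T_def[OF that] by (simp add: douglas_rachford_def fun_eq_iff)
  have DR: "T i = douglas_rachford (U i) (U (i + 1))" "Z i = Fix (douglas_rachford (U i) (U (i + 1)))"
    if "i \<in> {1..m}" for i
    using TD[OF that] Z_def[OF that] by simp_all
  show "\<exists>z \<in> (\<Inter>i\<in>{1..m}. Z i). converges_linearly (\<lambda>n. (comp_upto T m ^^ n) x0) z"
  proof (rule comp_upto_linear_convergence[OF m _ _ blr])
    show "norm (T i x - z)^2 + norm (x - T i x)^2 \<le> norm (x - z)^2"
      if "i \<in> {1..m}" "z \<in> Z i" for i x z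
      using douglas_rachford_fixed_point_ineq[OF U[OF that(1)]] DR[OF that(1)] that(2) by simp
    show "\<exists>K\<ge>0. \<forall>x. infdist x (Z i) \<le> K * norm (x - T i x)" if "i \<in> {1..m}" for i
      using douglas_rachford_regular[OF U[OF that] sumclosed[OF that]] DR[OF that] by simp
  qed
qed

end
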